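(* Let $n\ge 2$, $q=z_n=(1,2,\dots,n)^T$ and $X=F_n(z_n)$. Then $X^TX$ is invertible and the log-prime estimator $\ln\hat q=(X^TX)^{-1}X^T\ln z_n$ satisfies, for $i=1,\dots,n$, $$(\ln\hat q)_i=\begin{cases}\ln i,& i\text{ prime},\\ 0,& i\text{ not prime}.\end{cases}$$
   Context: Logarithms of vectors are entry-wise. For $1\le i\le n$, $e_{\bar i|n}\in\mathbb{R}^n$ has $k$-th entry $1$ if $i\mid k$, else $0$. For $2\le i\le n$, $f_{i|n}=\sum_{t=1}^{\lfloor \log_i n\rfloor} e_{\overline{i^t}|n}$, and by convention $f_{1|n}=1_n$ (all-ones vector). $F_n(z_n)=[f_{1|n}\ f_{2|n}\ \cdots\ f_{n|n}]\in\mathbb{R}^{n\times n}$. *)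

theory Defs
  imports Complex_Main "Jordan_Normal_Form.Matrix" "HOL-Computational_Algebra.Primes"
begin

(* Vectors in R^n are JNF vectors of dimension n; the paper's (1-based) entry k
   is stored at (0-based) index k-1. *)

definition ebar :: "nat \<Rightarrow> nat \<Rightarrow> real vec" where
  "ebar i n = vec n (\<lambda>k. if i dvd (k + 1) then 1 else 0)"

definition fvec :: "nat \<Rightarrow> nat \<Rightarrow> real vec" where
  "fvec i n = (if i = 1 then vec n (\<lambda>k. 1)
     else vec n (\<lambda>k. \<Sum>t\<in>{1..nat \<lfloor>log (real i) (real n)\<rfloor>}. ebar (i ^ t) n $ k))"

definition Fmat :: "nat \<Rightarrow> real mat" where
  "Fmat n = mat n n (\<lambda>(k, j). fvec (j + 1) n $ k)"

definition zvec :: "nat \<Rightarrow> real vec" where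
  "zvec n = vec n (\<lambda>k. real (k + 1))"

definition ln_vec :: "real vec \<Rightarrow> real vec" where
  "ln_vec v = map_vec ln v"

end

theory Submission
  imports Defs "Jordan_Normal_Form.Determinant"
begin

text \<open>
  Writing \<open>\<nu>\<^sub>p(k)\<close> for the multiplicity of \<open>p\<close> in \<open>k\<close>, the \<open>k\<close>-th entry of \<open>f\<^bsub>i|n\<^esub>\<close>
  (\<open>i \<ge> 2\<close>) counts the powers \<open>i\<^sup>t \<le> n\<close> dividing \<open>k\<close>, i.e. it is \<open>\<nu>\<^sub>i(k)\<close>. Since
  \<open>ln k = \<Sum>\<^sub>p \<nu>\<^sub>p(k) ln p\<close>, the data are fitted exactly: \<open>ln z\<^sub>n = X w\<close> for the vector
  \<open>w\<close> with \<open>w\<^sub>i = ln i\<close> at primes and \<open>0\<close> elsewhere. Column \<open>j\<close> of \<open>X\<close> is supported on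
  the multiples of \<open>j\<close> and has a \<open>1\<close> at row \<open>j\<close>, so \<open>X\<close> is unit lower triangular,
  \<open>X\<^sup>TX\<close> is invertible, and any inverse \<open>B\<close> gives \<open>B X\<^sup>T X w = w\<close>.
\<close>

lemma le_nat_floor_log_of_power:
  fixes b t n :: nat
  assumes "b ^ t \<le> n" "2 \<le> b"
  shows "t \<le> nat \<lfloor>log b n\<rfloor>"
proof -
  have "real b ^ t \<le> real n"
    using assms(1) by (metis of_nat_le_iff of_nat_power)
  then have "real t \<le> log b n"
    using assms(2) by (intro le_log_of_power) auto
  then have "int t \<le> \<lfloor>log b n\<rfloor>"
    by (simp add: le_floor_iff)
  then show ?thesis
    by linarith
qed

lemma power_dvd_atLeastAtMost_eq:
  fixes p x :: "'a :: factorial_semiring"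
  assumes "x \<noteq> 0" "\<not> is_unit p" "multiplicity p x \<le> L"
  shows "{t \<in> {1..L}. p ^ t dvd x} = {1..multiplicity p x}"
  using assms(3) by (auto simp: power_dvd_iff_le_multiplicity[OF assms(1,2)])

lemma sum_atLeast1_atMost_shift: "(\<Sum>p\<in>{1..n::nat}. g p) = (\<Sum>j<n. g (j + 1))"
  using sum.atLeast1_atMost_eq[of g n] by simp

lemma ln_eq_sum_multiplicity_ln:
  fixes m :: nat and A :: "nat set"
  assumes "m > 0" "finite A" "prime_factors m \<subseteq> A"
  shows "ln (real m) = (\<Sum>p\<in>A. if prime p then real (multiplicity p m) * ln (real p) else 0)"
proof -
  have "real m = real (\<Prod>p\<in>prime_factors m. p ^ multiplicity p m)"
    using prime_factorization_nat[OF assms(1)] by (rule arg_cong)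
  then have "ln (real m) = ln (\<Prod>p\<in>prime_factors m. real p ^ multiplicity p m)"
    by (simp add: of_nat_prod)
  also have "\<dots> = (\<Sum>p\<in>prime_factors m. ln (real p ^ multiplicity p m))"
    by (rule ln_prod) (auto simp: in_prime_factors_iff prime_gt_0_nat)
  also have "\<dots> = (\<Sum>p\<in>prime_factors m. real (multiplicity p m) * ln (real p))"
    by (intro sum.cong) (auto simp: ln_realpow in_prime_factors_iff prime_gt_0_nat)
  also have "\<dots> = (\<Sum>p\<in>A. if prime p then real (multiplicity p m) * ln (real p) else 0)"
    using assms
    by (intro sum.mono_neutral_cong_left)
       (auto simp: in_prime_factors_iff not_dvd_imp_multiplicity_0)
  finally show ?thesis .
qed

lemma det_unit_lower_triangular:
  fixes A :: "'a :: comm_ring_1 mat"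
  assumes "A \<in> carrier_mat n n"
    and "\<And>i j. i < j \<Longrightarrow> j < n \<Longrightarrow> A $$ (i, j) = 0"
    and "\<And>i. i < n \<Longrightarrow> A $$ (i, i) = 1"
  shows "det A = 1"
proof -
  have "det A = prod_list (diag_mat A)"
    by (rule det_lower_triangular[OF assms(2,1)])
  also have "\<dots> = (\<Prod>i = 0..<n. A $$ (i, i))"
    using assms(1) by (simp add: prod_list_diag_prod)
  also have "\<dots> = 1"
    using assms(3) by simp
  finally show ?thesis .
qed

lemma det_nonzero_imp_invertible_mat:
  fixes A :: "'a :: field mat"
  assumes A: "A \<in> carrier_mat n n" and "det A \<noteq> 0"
  shows "invertible_mat A"
proof -
  have "A \<in> Units (ring_mat TYPE('a) n undefined)"
    using assms by (rule det_non_zero_imp_unit)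
  then obtain B where "B \<in> carrier_mat n n" "B * A = 1\<^sub>m n" "A * B = 1\<^sub>m n"
    by (auto simp: Units_def ring_mat_def)
  with A have "inverts_mat A B \<and> inverts_mat B A"
    by (simp add: inverts_mat_def)
  with A show ?thesis
    unfolding invertible_mat_def by (auto simp: square_mat.simps)
qed

lemma invertible_gram_mat:
  fixes X :: "'a :: field mat"
  assumes X: "X \<in> carrier_mat n n" and "det X \<noteq> 0"
  shows "invertible_mat (transpose_mat X * X)"
proof (rule det_nonzero_imp_invertible_mat)
  show "transpose_mat X * X \<in> carrier_mat n n"
    using X by simp
  have "det (transpose_mat X * X) = det X * det X"
    using X by (simp add: det_mult[of _ n] det_transpose)
  then show "det (transpose_mat X * X) \<noteq> 0"
    using assms(2) by simp
qed

lemma least_squares_estimator_exact: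
  fixes X B :: "'a :: comm_ring_1 mat"
  assumes X: "X \<in> carrier_mat m n" and v: "v \<in> carrier_vec n"
    and inv: "inverts_mat (transpose_mat X * X) B" "inverts_mat B (transpose_mat X * X)"
  shows "(B * transpose_mat X) *\<^sub>v (X *\<^sub>v v) = v"
proof -
  have XT: "transpose_mat X \<in> carrier_mat n m"
    using X by simp
  have right: "transpose_mat X * X * B = 1\<^sub>m n"
    and left: "B * (transpose_mat X * X) = 1\<^sub>m (dim_row B)"
    using inv X by (auto simp: inverts_mat_def)
  have B: "B \<in> carrier_mat n n"
    using arg_cong[OF right, of dim_col] arg_cong[OF left, of dim_col] X by auto
  have "(B * transpose_mat X) *\<^sub>v (X *\<^sub>v v) = (B * transpose_mat X * X) *\<^sub>v v"
    using assoc_mult_mat_vec[OF mult_carrier_mat[OF B XT] X v] by (rule sym)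
  also have "B * transpose_mat X * X = 1\<^sub>m n"
    using assoc_mult_mat[OF B XT X] left B by simp
  finally show ?thesis
    using v by simp
qed

lemma fvec_entry:
  assumes "2 \<le> i" "k < n"
  shows "fvec i n $ k = real (multiplicity i (k + 1))"
proof -
  let ?L = "nat \<lfloor>log (real i) (real n)\<rfloor>"
  have "i ^ multiplicity i (k + 1) \<le> n"
    using multiplicity_dvd[of i "k + 1"] assms by (auto dest: dvd_imp_le)
  then have "{t \<in> {1..?L}. i ^ t dvd k + 1} = {1..multiplicity i (k + 1)}"
    using assms by (intro power_dvd_atLeastAtMost_eq le_nat_floor_log_of_power) auto
  moreover have "fvec i n $ k = real (card {t \<in> {1..?L}. i ^ t dvd k + 1})"
    using assms by (simp add: fvec_def ebar_def sum.If_cases Int_def)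
  ultimately show ?thesis by simp
qed

lemma Fmat_carrier: "Fmat n \<in> carrier_mat n n"
  by (simp add: Fmat_def)

lemma Fmat_entry:
  assumes "k < n" "j < n"
  shows "Fmat n $$ (k, j) = (if j = 0 then 1 else real (multiplicity (j + 1) (k + 1)))"
  using assms fvec_entry[of "j + 1" k n] by (auto simp: Fmat_def fvec_def)

lemma det_Fmat: "det (Fmat n) = 1"
proof (rule det_unit_lower_triangular[OF Fmat_carrier])
  fix i j assume "i < j" "j < n"
  then have "\<not> j + 1 dvd i + 1" by (auto dest: dvd_imp_le)
  with \<open>i < j\<close> \<open>j < n\<close> show "Fmat n $$ (i, j) = 0"
    by (simp add: Fmat_entry not_dvd_imp_multiplicity_0)
qed (simp add: Fmat_entry multiplicity_self)

definition log_prime_vec :: "nat \<Rightarrow> real vec" where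
  "log_prime_vec n = vec n (\<lambda>j. if prime (j + 1) then ln (real (j + 1)) else 0)"

lemma ln_vec_zvec_eq: "ln_vec (zvec n) = Fmat n *\<^sub>v log_prime_vec n"
proof (rule eq_vecI)
  fix k assume "k < dim_vec (Fmat n *\<^sub>v log_prime_vec n)"
  then have k: "k < n" by (simp add: Fmat_def)
  have "(Fmat n *\<^sub>v log_prime_vec n) $ k = (\<Sum>j<n. Fmat n $$ (k, j) * log_prime_vec n $ j)"
    using k by (simp add: Fmat_def log_prime_vec_def scalar_prod_def atLeast0LessThan)
  also have "\<dots> = (\<Sum>j<n. if prime (j + 1)
                    then real (multiplicity (j + 1) (k + 1)) * ln (real (j + 1)) else 0)"
    using k by (intro sum.cong) (auto simp: Fmat_entry log_prime_vec_def)
  also have "\<dots> = (\<Sum>p\<in>{1..n}. if prime p then real (multiplicity p (k + 1)) * ln (real p) else 0)"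
    by (rule sum_atLeast1_atMost_shift
          [of "\<lambda>p. if prime p then real (multiplicity p (k + 1)) * ln (real p) else 0", symmetric])
  also have "\<dots> = ln (real (k + 1))"
  proof (rule ln_eq_sum_multiplicity_ln [symmetric])
    show "prime_factors (k + 1) \<subseteq> {1..n}"
    proof
      fix p assume "p \<in> prime_factors (k + 1)"
      then have "prime p" "p dvd k + 1"
        by (auto simp: in_prime_factors_iff)
      then show "p \<in> {1..n}"
        using k prime_ge_1_nat[of p] dvd_imp_le[of p "k + 1"] by simp
    qed
  qed simp_all
  finally show "ln_vec (zvec n) $ k = (Fmat n *\<^sub>v log_prime_vec n) $ k"
    using k by (simp add: ln_vec_def zvec_def)
qed (simp add: ln_vec_def zvec_def Fmat_def)

theorem theorem3p4:
  fixes n :: nat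
  assumes "n \<ge> 2"
  defines "X \<equiv> Fmat n"
  shows "invertible_mat (transpose_mat X * X) \<and>
    (\<forall>B. inverts_mat (transpose_mat X * X) B \<and> inverts_mat B (transpose_mat X * X) \<longrightarrow>
       (let lnq = (B * transpose_mat X) *\<^sub>v ln_vec (zvec n) in
        dim_vec lnq = n \<and>
        (\<forall>i\<in>{1..n}. lnq $ (i - 1) = (if prime i then ln (real i) else 0))))"
proof (intro conjI allI impI)
  show "invertible_mat (transpose_mat X * X)"
    unfolding X_def by (rule invertible_gram_mat[OF Fmat_carrier]) (simp add: det_Fmat)
next
  fix B
  assume "inverts_mat (transpose_mat X * X) B \<and> inverts_mat B (transpose_mat X * X)"
  then have "(B * transpose_mat X) *\<^sub>v ln_vec (zvec n) = log_prime_vec n"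
    unfolding ln_vec_zvec_eq X_def
    by (intro least_squares_estimator_exact[OF Fmat_carrier]) (auto simp: log_prime_vec_def)
  then show "let lnq = (B * transpose_mat X) *\<^sub>v ln_vec (zvec n) in
      dim_vec lnq = n \<and> (\<forall>i\<in>{1..n}. lnq $ (i - 1) = (if prime i then ln (real i) else 0))"
    by (auto simp: log_prime_vec_def)
qed

end
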